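(* For every circular arc graph $G$, $\operatorname{box}(G)\le 2\omega(G)+1\le 2\Delta(G)+3$.
   Context: A graph $G$ is a circular arc graph if its vertices can be put in one-to-one correspondence with a set of arcs of a circle so that two vertices are adjacent iff their arcs intersect. $\omega(G)$ is the clique number and $\Delta(G)$ the maximum degree. The boxicity $\operatorname{box}(G)$ is the minimum $b$ such that $G$ is the intersection graph of axis-parallel boxes in $\mathbb{R}^b$ (products of $b$ closed intervals), one box per vertex. *)

theory Defs
  imports Complex_Main
begin

definition simple_graph :: "'a set \<Rightarrow> ('a \<Rightarrow> 'a \<Rightarrow> bool) \<Rightarrow> bool" where
  "simple_graph V E \<longleftrightarrow> finite V \<and> (\<forall>u v. E u v \<longrightarrow> E v u) \<and> (\<forall>v. \<not> E v v)
     \<and> (\<forall>u v. E u v \<longrightarrow> u \<in> V \<and> v \<in> V)"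

text \<open>The circle is modelled as R/Z, i.e. points are reals taken modulo 1.
The closed arc starting at a and running counterclockwise for length l (l \<ge> 0;
l \<ge> 1 gives the whole circle) is the set of points x with frac (x - a) \<le> l.\<close>

definition arc :: "real \<Rightarrow> real \<Rightarrow> real set" where
  "arc a l = {x. 0 \<le> x \<and> x < 1 \<and> frac (x - a) \<le> l}"

definition circular_arc_graph :: "'a set \<Rightarrow> ('a \<Rightarrow> 'a \<Rightarrow> bool) \<Rightarrow> bool" where
  "circular_arc_graph V E \<longleftrightarrow>
     (\<exists>(a :: 'a \<Rightarrow> real) (l :: 'a \<Rightarrow> real). (\<forall>v\<in>V. 0 \<le> l v) \<and>
        (\<forall>u\<in>V. \<forall>v\<in>V. u \<noteq> v \<longrightarrow> (E u v \<longleftrightarrow> arc (a u) (l u) \<inter> arc (a v) (l v) \<noteq> {})))"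

text \<open>Box representation in R^b: vertex v gets the box
\<Prod>_{i<b} [lo v i, hi v i]; two closed boxes meet iff their intervals meet in every coordinate.\<close>

definition box_rep :: "'a set \<Rightarrow> ('a \<Rightarrow> 'a \<Rightarrow> bool) \<Rightarrow> nat \<Rightarrow> bool" where
  "box_rep V E b \<longleftrightarrow>
     (\<exists>(lo :: 'a \<Rightarrow> nat \<Rightarrow> real) (hi :: 'a \<Rightarrow> nat \<Rightarrow> real).
        (\<forall>v\<in>V. \<forall>i<b. lo v i \<le> hi v i) \<and>
        (\<forall>u\<in>V. \<forall>v\<in>V. u \<noteq> v \<longrightarrow>
            (E u v \<longleftrightarrow> (\<forall>i<b. lo u i \<le> hi v i \<and> lo v i \<le> hi u i))))"

definition boxicity :: "'a set \<Rightarrow> ('a \<Rightarrow> 'a \<Rightarrow> bool) \<Rightarrow> nat" where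
  "boxicity V E = (LEAST b. box_rep V E b)"

definition clique_number :: "'a set \<Rightarrow> ('a \<Rightarrow> 'a \<Rightarrow> bool) \<Rightarrow> nat" where
  "clique_number V E = Max {card C | C. C \<subseteq> V \<and> (\<forall>u\<in>C. \<forall>v\<in>C. u \<noteq> v \<longrightarrow> E u v)}"

definition degree :: "'a set \<Rightarrow> ('a \<Rightarrow> 'a \<Rightarrow> bool) \<Rightarrow> 'a \<Rightarrow> nat" where
  "degree V E v = card {u \<in> V. E v u}"

definition max_degree :: "'a set \<Rightarrow> ('a \<Rightarrow> 'a \<Rightarrow> bool) \<Rightarrow> nat" where
  "max_degree V E = (if V = {} then 0 else Max (degree V E ` V))"

end

theory Submission
  imports Defs
begin

text \<open>The arcs through the point 0 of the circle pairwise meet, so they form a clique S with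
  |S| \<le> \<omega>. Every other arc is a genuine interval of [0,1), so G - S is an interval graph and has
  boxicity at most 1. Adding back a vertex s costs one dimension: in the new coordinate s gets
  [0,0], its neighbours [0,1] and its non-neighbours [1,1], while in the old coordinates s gets
  a box meeting all others. Hence box(G) \<le> |S| + 1 \<le> \<omega> + 1 \<le> 2\<omega> + 1, and \<omega> \<le> \<Delta> + 1 because
  any vertex of a clique is adjacent to all the others.\<close>

lemma arc_eq_atLeastAtMost:
  assumes "0 \<notin> arc a l"
  shows "arc a l = {frac a .. frac a + l}"
proof -
  have "frac a + frac (- a) \<le> 1"
    using frac_lt_1[of a] by (simp add: frac_neg)
  moreover have "l < frac (- a)"
    using assms by (simp add: arc_def)
  ultimately have arc_end: "frac a + l < 1"
    by linarith
  have mem: "x \<in> arc a l \<longleftrightarrow> x \<in> {frac a .. frac a + l}" if x: "0 \<le> x" "x < 1" for x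
  proof (cases "frac a \<le> x")
    case True
    then have "frac (x - a) = x - frac a"
      using frac_diff_pos[of a x] x by simp
    then show ?thesis
      using True x by (auto simp: arc_def)
  next
    case False
    then have "frac (x - a) = x + 1 - frac a"
      using frac_diff_neg[of x a] x by simp
    then show ?thesis
      using False x arc_end by (simp add: arc_def)
  qed
  have in_unit: "0 \<le> x \<and> x < 1" if "x \<in> {frac a .. frac a + l}" for x
    using that arc_end frac_ge_0[of a] by (simp only: atLeastAtMost_iff) linarith
  show ?thesis
  proof (rule set_eqI)
    fix x
    show "x \<in> arc a l \<longleftrightarrow> x \<in> {frac a .. frac a + l}"
    proof (cases "0 \<le> x \<and> x < 1")
      case True
      then show ?thesis
        using mem by blast
    next
      case False
      then show ?thesis
        using in_unit[of x] by (auto simp: arc_def)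
    qed
  qed
qed

lemma interval_model_imp_box_rep_1:
  fixes x y :: "'a \<Rightarrow> real"
  assumes "\<forall>v\<in>V. x v \<le> y v"
    and "\<forall>u\<in>V. \<forall>v\<in>V. u \<noteq> v \<longrightarrow> (E u v \<longleftrightarrow> {x u..y u} \<inter> {x v..y v} \<noteq> {})"
  shows "box_rep V E 1"
  unfolding box_rep_def
  by (rule exI[of _ "\<lambda>v i. x v"], rule exI[of _ "\<lambda>v i. y v"]) (use assms in auto)

lemma arcs_avoiding_0_box_rep_1:
  assumes "\<forall>v\<in>V. 0 \<le> l v" and "\<forall>v\<in>V. 0 \<notin> arc (a v) (l v)"
    and "\<forall>u\<in>V. \<forall>v\<in>V. u \<noteq> v \<longrightarrow> (E u v \<longleftrightarrow> arc (a u) (l u) \<inter> arc (a v) (l v) \<noteq> {})"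
  shows "box_rep V E 1"
proof (rule interval_model_imp_box_rep_1)
  show "\<forall>v\<in>V. frac (a v) \<le> frac (a v) + l v"
    using assms(1) by simp
  have "\<forall>v\<in>V. arc (a v) (l v) = {frac (a v) .. frac (a v) + l v}"
    using assms(2) arc_eq_atLeastAtMost by blast
  then show "\<forall>u\<in>V. \<forall>v\<in>V. u \<noteq> v \<longrightarrow>
      (E u v \<longleftrightarrow> {frac (a u) .. frac (a u) + l u} \<inter> {frac (a v) .. frac (a v) + l v} \<noteq> {})"
    using assms(3) by metis
qed

lemma box_rep_add_vertex:
  assumes "finite V" and "s \<in> V" and sym: "\<And>u v. E u v \<Longrightarrow> E v u"
    and "box_rep (V - {s}) E b"
  shows "box_rep V E (Suc b)"
proof -
  obtain lo hi :: "'a \<Rightarrow> nat \<Rightarrow> real"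
    where lo_le_hi: "\<forall>v\<in>V - {s}. \<forall>i<b. lo v i \<le> hi v i"
    and rep: "\<forall>u\<in>V - {s}. \<forall>v\<in>V - {s}. u \<noteq> v \<longrightarrow>
                (E u v \<longleftrightarrow> (\<forall>i<b. lo u i \<le> hi v i \<and> lo v i \<le> hi u i))"
    using assms(4) unfolding box_rep_def by blast
  define m where "m i = Min (insert 0 ((\<lambda>v. lo v i) ` (V - {s})))" for i
  define M where "M i = Max (insert 0 ((\<lambda>v. hi v i) ` (V - {s})))" for i
  have m_le: "m i \<le> 0" "v \<in> V - {s} \<Longrightarrow> m i \<le> lo v i" for v i
    unfolding m_def using assms(1) by (auto intro: Min_le)
  have M_ge: "0 \<le> M i" "v \<in> V - {s} \<Longrightarrow> hi v i \<le> M i" for v i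
    unfolding M_def using assms(1) by (auto intro: Max_ge)
  define lo' where "lo' v i =
    (if i = b then (if v = s \<or> E s v then 0 else 1) else if v = s then m i else lo v i)" for v i
  define hi' where "hi' v i =
    (if i = b then (if v = s then 0 else 1) else if v = s then M i else hi v i)" for v i
  have lo'_le_hi': "lo' v i \<le> hi' v i" if "v \<in> V" "i < Suc b" for v i
    using that lo_le_hi[rule_format, of v i] m_le(1)[of i] M_ge(1)[of i] unfolding lo'_def hi'_def
    by (auto simp: less_Suc_eq)
  have s_meets: "m i \<le> hi w i \<and> lo w i \<le> M i" if "w \<in> V - {s}" "i < b" for w i
    using that lo_le_hi[rule_format, of w i] m_le(2)[of w i] M_ge(2)[of w i] by linarith
  have old_coords: "lo' u i \<le> hi' v i \<and> lo' v i \<le> hi' u i \<longleftrightarrow>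
      (u \<noteq> s \<and> v \<noteq> s \<longrightarrow> lo u i \<le> hi v i \<and> lo v i \<le> hi u i)"
    if "u \<in> V" "v \<in> V" "u \<noteq> v" "i < b" for u v i
    using that s_meets[of u i] s_meets[of v i] unfolding lo'_def hi'_def by auto
  have new_coord: "lo' u b \<le> hi' v b \<and> lo' v b \<le> hi' u b \<longleftrightarrow>
      (u = s \<longrightarrow> E s v) \<and> (v = s \<longrightarrow> E s u)"
    if "u \<noteq> v" for u v
    using that unfolding lo'_def hi'_def by auto
  have edges: "E u v \<longleftrightarrow> (\<forall>i<Suc b. lo' u i \<le> hi' v i \<and> lo' v i \<le> hi' u i)"
    if uv: "u \<in> V" "v \<in> V" "u \<noteq> v" for u v
  proof -
    have "(\<forall>i<Suc b. lo' u i \<le> hi' v i \<and> lo' v i \<le> hi' u i) \<longleftrightarrow>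
        (u = s \<longrightarrow> E s v) \<and> (v = s \<longrightarrow> E s u)
        \<and> (u \<noteq> s \<and> v \<noteq> s \<longrightarrow> (\<forall>i<b. lo u i \<le> hi v i \<and> lo v i \<le> hi u i))"
      unfolding All_less_Suc new_coord[OF uv(3)] using old_coords[OF uv] by blast
    then show ?thesis
      using rep[rule_format, of u v] uv sym by blast
  qed
  show ?thesis
    unfolding box_rep_def
    by (intro exI[of _ lo'] exI[of _ hi'] conjI ballI allI impI lo'_le_hi' edges) auto
qed

lemma box_rep_add_vertices:
  assumes "finite V" and "S \<subseteq> V" and sym: "\<And>u v. E u v \<Longrightarrow> E v u"
    and "box_rep (V - S) E b"
  shows "box_rep V E (card S + b)"
proof -
  have "finite S"
    using assms(2,1) by (rule finite_subset)
  then show ?thesis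
    using assms(1,2,4)
  proof (induction S arbitrary: V rule: finite_induct)
    case empty
    then show ?case
      by simp
  next
    case (insert s S)
    have "box_rep (V - {s} - S) E b"
      using insert.prems(3) unfolding Diff_insert2[symmetric] .
    then have "box_rep (V - {s}) E (card S + b)"
      using insert.prems(1,2) insert.hyps(2) by (intro insert.IH) auto
    then have "box_rep V E (Suc (card S + b))"
      using insert.prems(1,2) by (intro box_rep_add_vertex[OF _ _ sym]) auto
    then show ?case
      using insert.hyps by simp
  qed
qed

lemma finite_clique_sizes:
  assumes "finite V"
  shows "finite {card C | C. C \<subseteq> V \<and> (\<forall>u\<in>C. \<forall>v\<in>C. u \<noteq> v \<longrightarrow> E u v)}"
  by (rule finite_subset[of _ "card ` Pow V"]) (use assms in auto)

lemma card_clique_le_clique_number: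
  assumes "finite V" and "C \<subseteq> V" and "\<forall>u\<in>C. \<forall>v\<in>C. u \<noteq> v \<longrightarrow> E u v"
  shows "card C \<le> clique_number V E"
  unfolding clique_number_def using assms finite_clique_sizes[OF assms(1)] by (intro Max_ge) auto

lemma clique_number_le_Suc_max_degree:
  assumes "finite V"
  shows "clique_number V E \<le> max_degree V E + 1"
proof -
  have "clique_number V E \<in> {card C | C. C \<subseteq> V \<and> (\<forall>u\<in>C. \<forall>v\<in>C. u \<noteq> v \<longrightarrow> E u v)}"
    unfolding clique_number_def using finite_clique_sizes[OF assms] by (intro Max_in) auto
  then obtain C where C: "C \<subseteq> V" "\<forall>u\<in>C. \<forall>v\<in>C. u \<noteq> v \<longrightarrow> E u v"
    and card_C: "card C = clique_number V E"
    by auto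
  show ?thesis
  proof (cases "C = {}")
    case True
    then show ?thesis
      using card_C by simp
  next
    case False
    then obtain v where v: "v \<in> C"
      by blast
    have "card C - 1 = card (C - {v})"
      using v by simp
    also have "\<dots> \<le> degree V E v"
      unfolding degree_def using C v assms by (intro card_mono) auto
    also have "\<dots> \<le> max_degree V E"
      unfolding max_degree_def using C v assms by auto
    finally show ?thesis
      using card_C by linarith
  qed
qed

lemma boxicity_circular_arc_graph_le:
  assumes "simple_graph V E" and "circular_arc_graph V E"
  shows "boxicity V E \<le> clique_number V E + 1"
proof -
  have fin: "finite V" and sym: "\<And>u v. E u v \<Longrightarrow> E v u"
    using assms(1) unfolding simple_graph_def by auto
  obtain a l where l_nonneg: "\<forall>v\<in>V. 0 \<le> l v"
    and rep: "\<forall>u\<in>V. \<forall>v\<in>V. u \<noteq> v \<longrightarrow> (E u v \<longleftrightarrow> arc (a u) (l u) \<inter> arc (a v) (l v) \<noteq> {})"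
    using assms(2) unfolding circular_arc_graph_def by blast
  define S where "S = {v \<in> V. 0 \<in> arc (a v) (l v)}"
  have "\<forall>u\<in>S. \<forall>v\<in>S. u \<noteq> v \<longrightarrow> E u v"
    using rep unfolding S_def by blast
  then have clique: "card S \<le> clique_number V E"
    using fin by (intro card_clique_le_clique_number) (auto simp: S_def)
  have "box_rep (V - S) E 1"
    using l_nonneg rep unfolding S_def by (intro arcs_avoiding_0_box_rep_1[where a = a and l = l]) blast+
  then have "box_rep V E (card S + 1)"
    using fin sym by (intro box_rep_add_vertices) (auto simp: S_def)
  then have "boxicity V E \<le> card S + 1"
    unfolding boxicity_def by (rule Least_le)
  then show ?thesis
    using clique by linarith
qed

theorem theorem6:
  fixes V :: "'a set" and E :: "'a \<Rightarrow> 'a \<Rightarrow> bool"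
  assumes "simple_graph V E"
    and "circular_arc_graph V E"
  shows "boxicity V E \<le> 2 * clique_number V E + 1
         \<and> 2 * clique_number V E + 1 \<le> 2 * max_degree V E + 3"
proof -
  have "finite V"
    using assms(1) unfolding simple_graph_def by blast
  then have "clique_number V E \<le> max_degree V E + 1"
    by (rule clique_number_le_Suc_max_degree)
  moreover have "boxicity V E \<le> clique_number V E + 1"
    using assms by (rule boxicity_circular_arc_graph_le)
  ultimately show ?thesis
    by linarith
qed

end
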